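(* The restrictions to $L^{(d-1)}$ of the polynomials $\langle v,v\rangle$ and $\langle M^kv,M^kv\rangle$, $1\le k<d$, generate the field $\mathbb C(L^{(d-1)})^{W_d(\mathbb C)}$ of $W_d(\mathbb C)$-invariant rational functions on $L^{(d-1)}$.
   Context: Fix $d\ge2$. $V=\mathbb C^d\oplus\mathfrak{so}(d,\mathbb C)$ has elements $(v,M)$, $v=(c_1,\dots,c_d)^\top$, $M$ complex skew-symmetric with $M_{ij}=c_{ij}=-M_{ji}$ for $i<j$, on which $O_d(\mathbb C)=\{A:AA^\top=I\}$ acts by $(Av,AMA^\top)$. $\langle a,b\rangle=\sum_ia_ib_i$ (bilinear, no conjugation). $L^{(d-1)}\subset V$ is the linear subspace of pairs with $v=(0,\dots,0,c_d)^\top$ and $M$ having only the entries $c_{12},c_{23},\dots,c_{(d-1)d}$ (and their negatives) possibly nonzero. $W_d(\mathbb C)$ is the group of diagonal matrices with diagonal entries in $\{-1,1\}$, acting on $L^{(d-1)}$ by restriction of the action. Generation is as a field over $\mathbb C$. *)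

theory Defs
  imports Complex_Main
begin

text \<open>Vectors in C^d are functions nat => complex, d x d matrices are
functions nat => nat => complex; only indices < d are meaningful (0-based indexing,
so paper index i corresponds to i-1 here).\<close>

definition bil :: "nat \<Rightarrow> (nat \<Rightarrow> complex) \<Rightarrow> (nat \<Rightarrow> complex) \<Rightarrow> complex" where
  "bil d a b = (\<Sum>i<d. a i * b i)"

definition mat_vec :: "nat \<Rightarrow> (nat \<Rightarrow> nat \<Rightarrow> complex) \<Rightarrow> (nat \<Rightarrow> complex) \<Rightarrow> (nat \<Rightarrow> complex)" where
  "mat_vec d A v = (\<lambda>i. \<Sum>j<d. A i j * v j)"

definition mat_mul :: "nat \<Rightarrow> (nat \<Rightarrow> nat \<Rightarrow> complex) \<Rightarrow> (nat \<Rightarrow> nat \<Rightarrow> complex) \<Rightarrow> (nat \<Rightarrow> nat \<Rightarrow> complex)" where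
  "mat_mul d A B = (\<lambda>i k. \<Sum>j<d. A i j * B j k)"

definition transp :: "(nat \<Rightarrow> nat \<Rightarrow> complex) \<Rightarrow> (nat \<Rightarrow> nat \<Rightarrow> complex)" where
  "transp A = (\<lambda>i j. A j i)"

definition id_mat :: "nat \<Rightarrow> (nat \<Rightarrow> nat \<Rightarrow> complex)" where
  "id_mat d = (\<lambda>i j. if i = j \<and> i < d then 1 else 0)"

fun mat_pow :: "nat \<Rightarrow> (nat \<Rightarrow> nat \<Rightarrow> complex) \<Rightarrow> nat \<Rightarrow> (nat \<Rightarrow> nat \<Rightarrow> complex)" where
  "mat_pow d M 0 = id_mat d"
| "mat_pow d M (Suc k) = mat_mul d M (mat_pow d M k)"

text \<open>Coordinates on L^(d-1): x 0 = c_d, and x i = c_{i,i+1} for 1 \<le> i \<le> d-1.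
  L_vec / L_mat give the corresponding element (v, M) of V.\<close>

definition L_vec :: "nat \<Rightarrow> (nat \<Rightarrow> complex) \<Rightarrow> (nat \<Rightarrow> complex)" where
  "L_vec d x = (\<lambda>i. if i = d - 1 then x 0 else 0)"

definition L_mat :: "nat \<Rightarrow> (nat \<Rightarrow> complex) \<Rightarrow> (nat \<Rightarrow> nat \<Rightarrow> complex)" where
  "L_mat d x = (\<lambda>i j. if j = i + 1 \<and> j < d then x j
                      else if i = j + 1 \<and> i < d then - x i else 0)"

definition L_coord :: "nat \<Rightarrow> (nat \<Rightarrow> complex) \<Rightarrow> (nat \<Rightarrow> nat \<Rightarrow> complex) \<Rightarrow> (nat \<Rightarrow> complex)" where
  "L_coord d v M = (\<lambda>i. if i = 0 then v (d - 1) else if i < d then M (i - 1) i else 0)"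

definition Wd :: "nat \<Rightarrow> (nat \<Rightarrow> nat \<Rightarrow> complex) set" where
  "Wd d = {A. (\<forall>i j. (i \<noteq> j \<or> d \<le> i) \<longrightarrow> A i j = 0) \<and> (\<forall>i<d. A i i = 1 \<or> A i i = -1)}"

definition W_act_L :: "nat \<Rightarrow> (nat \<Rightarrow> nat \<Rightarrow> complex) \<Rightarrow> (nat \<Rightarrow> complex) \<Rightarrow> (nat \<Rightarrow> complex)" where
  "W_act_L d A x = L_coord d (mat_vec d A (L_vec d x))
                             (mat_mul d (mat_mul d A (L_mat d x)) (transp A))"

text \<open>Polynomial functions in the variables x 0, ..., x (d-1) (over C, which is infinite,
  these correspond exactly to polynomials).\<close>
inductive_set poly_fun :: "nat \<Rightarrow> ((nat \<Rightarrow> complex) \<Rightarrow> complex) set" for d where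
  pf_const: "(\<lambda>x. c) \<in> poly_fun d"
| pf_var: "i < d \<Longrightarrow> (\<lambda>x. x i) \<in> poly_fun d"
| pf_add: "p \<in> poly_fun d \<Longrightarrow> q \<in> poly_fun d \<Longrightarrow> (\<lambda>x. p x + q x) \<in> poly_fun d"
| pf_mult: "p \<in> poly_fun d \<Longrightarrow> q \<in> poly_fun d \<Longrightarrow> (\<lambda>x. p x * q x) \<in> poly_fun d"

definition rat_funs :: "nat \<Rightarrow> (((nat \<Rightarrow> complex) \<Rightarrow> complex) \<times> ((nat \<Rightarrow> complex) \<Rightarrow> complex)) set" where
  "rat_funs d = {(p, q). p \<in> poly_fun d \<and> q \<in> poly_fun d \<and> (\<exists>x. q x \<noteq> 0)}"

definition same_ratfun :: "(((nat \<Rightarrow> complex) \<Rightarrow> complex) \<times> ((nat \<Rightarrow> complex) \<Rightarrow> complex))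
     \<Rightarrow> (((nat \<Rightarrow> complex) \<Rightarrow> complex) \<times> ((nat \<Rightarrow> complex) \<Rightarrow> complex)) \<Rightarrow> bool" where
  "same_ratfun r s = (\<forall>x. fst r x * snd s x = fst s x * snd r x)"

definition W_invariant :: "nat \<Rightarrow> (((nat \<Rightarrow> complex) \<Rightarrow> complex) \<times> ((nat \<Rightarrow> complex) \<Rightarrow> complex)) \<Rightarrow> bool" where
  "W_invariant d r = (\<forall>A\<in>Wd d. same_ratfun (fst r \<circ> W_act_L d A, snd r \<circ> W_act_L d A) r)"

definition gens :: "nat \<Rightarrow> (nat \<Rightarrow> complex) \<Rightarrow> (nat \<Rightarrow> complex)" where
  "gens d x = (\<lambda>k. if k = 0 then bil d (L_vec d x) (L_vec d x)
                   else if k < d then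
                     bil d (mat_vec d (mat_pow d (L_mat d x) k) (L_vec d x))
                           (mat_vec d (mat_pow d (L_mat d x) k) (L_vec d x))
                   else 0)"

definition gen_field :: "nat \<Rightarrow> (((nat \<Rightarrow> complex) \<Rightarrow> complex) \<times> ((nat \<Rightarrow> complex) \<Rightarrow> complex)) set" where
  "gen_field d = {(P \<circ> gens d, Q \<circ> gens d) | P Q.
       P \<in> poly_fun d \<and> Q \<in> poly_fun d \<and> (\<exists>x. Q (gens d x) \<noteq> 0)}"

end

theory Submission
  imports Defs "HOL-Computational_Algebra.Polynomial"
begin

text \<open>In the coordinates \<open>x\<^sub>0 = c\<^sub>d\<close>, \<open>x\<^sub>i = c\<^sub>i\<^sub>,\<^sub>i\<^sub>+\<^sub>1\<close> of \<open>L\<^sup>(\<^sup>d\<^sup>-\<^sup>1\<^sup>)\<close>, the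
  group \<open>W\<^sub>d\<close> acts by all sign changes of the coordinates, so the invariant field is
  \<open>\<complex>(x\<^sub>0\<^sup>2, \<dots>, x\<^sub>d\<^sub>-\<^sub>1\<^sup>2)\<close>: an invariant fraction can be rewritten with sign-invariant
  numerator and denominator, and averaging over sign changes shows that a sign-invariant
  polynomial is a polynomial in the squares.

  The generators recover the squares one at a time. First \<open>\<langle>v, v\<rangle> = x\<^sub>0\<^sup>2\<close>. For
  \<open>1 \<le> k < d\<close> the vector \<open>M\<^sup>k v\<close> vanishes below position \<open>d - k\<close>, its entry there is
  \<open>x\<^sub>0 x\<^sub>d\<^sub>-\<^sub>k \<cdots> x\<^sub>d\<^sub>-\<^sub>1\<close>, and its remaining entries only involve
  \<open>x\<^sub>0, x\<^sub>d\<^sub>-\<^sub>k\<^sub>+\<^sub>1, \<dots>, x\<^sub>d\<^sub>-\<^sub>1\<close>. Hence \<open>\<langle>M\<^sup>k v, M\<^sup>k v\<rangle>\<close> is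
  \<open>x\<^sub>0\<^sup>2 x\<^sub>d\<^sub>-\<^sub>k\<^sup>2 \<cdots> x\<^sub>d\<^sub>-\<^sub>1\<^sup>2\<close> plus a sign-invariant polynomial in the earlier variables,
  i.e. a polynomial in squares already recovered, and \<open>x\<^sub>d\<^sub>-\<^sub>k\<^sup>2\<close> is obtained by division.
  All identities are first established on the torus \<open>x\<^sub>0 \<cdots> x\<^sub>d\<^sub>-\<^sub>1 \<noteq> 0\<close>; a polynomial vanishing
  there vanishes identically.\<close>

section \<open>Polynomial functions\<close>

lemma poly_fun_neg: "p \<in> poly_fun d \<Longrightarrow> (\<lambda>x. - p x) \<in> poly_fun d"
  using pf_mult[OF pf_const[of "-1"]] by simp

lemma poly_fun_diff: "p \<in> poly_fun d \<Longrightarrow> q \<in> poly_fun d \<Longrightarrow> (\<lambda>x. p x - q x) \<in> poly_fun d"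
  using pf_add[OF _ poly_fun_neg, of p d q] by simp

lemma poly_fun_sum:
  "finite A \<Longrightarrow> (\<And>a. a \<in> A \<Longrightarrow> f a \<in> poly_fun d) \<Longrightarrow> (\<lambda>x. \<Sum>a\<in>A. f a x) \<in> poly_fun d"
  by (induction A rule: finite_induct) (auto intro: pf_add pf_const[of 0, simplified])

lemma poly_fun_prod:
  "finite A \<Longrightarrow> (\<And>a. a \<in> A \<Longrightarrow> f a \<in> poly_fun d) \<Longrightarrow> (\<lambda>x. \<Prod>a\<in>A. f a x) \<in> poly_fun d"
  by (induction A rule: finite_induct) (auto intro: pf_mult pf_const[of 1, simplified])

lemma poly_fun_if:
  "(b \<Longrightarrow> f \<in> poly_fun d) \<Longrightarrow> (\<not> b \<Longrightarrow> g \<in> poly_fun d) \<Longrightarrow> (\<lambda>x. if b then f x else g x) \<in> poly_fun d"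
  by (cases b) simp_all

lemma poly_fun_compose:
  "P \<in> poly_fun n \<Longrightarrow> (\<And>k. k < n \<Longrightarrow> (\<lambda>x. G x k) \<in> poly_fun d) \<Longrightarrow> (\<lambda>x. P (G x)) \<in> poly_fun d"
  by (induction P rule: poly_fun.induct) (auto intro: pf_const pf_add pf_mult)

lemma poly_fun_cong: "f \<in> poly_fun d \<Longrightarrow> (\<And>i. i < d \<Longrightarrow> x i = y i) \<Longrightarrow> f x = f y"
  by (induction f rule: poly_fun.induct) auto

lemma poly_fun_univariate: "f \<in> poly_fun d \<Longrightarrow> \<exists>p. \<forall>t. f (x(i := t)) = poly p t"
proof (induction f rule: poly_fun.induct)
  case (pf_const c)
  show ?case by (rule exI[of _ "[:c:]"]) simp
next
  case (pf_var j)
  show ?case by (cases "j = i") (auto intro: exI[of _ "[:0, 1:]"] exI[of _ "[:x j:]"])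
next
  case (pf_add p q)
  then obtain a b where "\<forall>t. p (x(i := t)) = poly a t" "\<forall>t. q (x(i := t)) = poly b t" by blast
  then show ?case by (intro exI[of _ "a + b"]) (simp del: fun_upd_apply)
next
  case (pf_mult p q)
  then obtain a b where "\<forall>t. p (x(i := t)) = poly a t" "\<forall>t. q (x(i := t)) = poly b t" by blast
  then show ?case by (intro exI[of _ "a * b"]) (simp del: fun_upd_apply)
qed

text \<open>Polynomial functions form an integral domain: one variable at a time, a nonzero
  univariate polynomial has only finitely many roots, so the points where \<open>f\<close> and \<open>g\<close>
  are nonzero can be moved to agree in one more coordinate.\<close>

lemma poly_fun_mult_nonzero:
  assumes f: "f \<in> poly_fun d" and g: "g \<in> poly_fun d" and "f a \<noteq> 0" and "g b \<noteq> 0"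
  shows "\<exists>x. f x * g x \<noteq> 0"
proof -
  have "\<exists>a b. f a \<noteq> 0 \<and> g b \<noteq> 0 \<and> (\<forall>i<k. a i = b i)" for k
  proof (induction k)
    case 0
    then show ?case using assms by blast
  next
    case (Suc k)
    then obtain a b where ab: "f a \<noteq> 0" "g b \<noteq> 0" "\<forall>i<k. a i = b i" by blast
    obtain pa where pa: "\<forall>t. f (a(k := t)) = poly pa t" using poly_fun_univariate[OF f] by blast
    obtain pb where pb: "\<forall>t. g (b(k := t)) = poly pb t" using poly_fun_univariate[OF g] by blast
    have "pa \<noteq> 0" "pb \<noteq> 0" using pa[rule_format, of "a k"] pb[rule_format, of "b k"] ab by auto
    then have "finite ({t. poly pa t = 0} \<union> {t. poly pb t = 0})"
      by (simp add: poly_roots_finite)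
    then obtain t where "t \<notin> {t. poly pa t = 0} \<union> {t. poly pb t = 0}"
      using ex_new_if_finite[OF infinite_UNIV_char_0] by blast
    then have "f (a(k := t)) \<noteq> 0" "g (b(k := t)) \<noteq> 0" using pa pb by auto
    moreover have "\<forall>i<Suc k. (a(k := t)) i = (b(k := t)) i" using ab(3) by (auto simp: less_Suc_eq)
    ultimately show ?case by blast
  qed
  then obtain a' b' where "f a' \<noteq> 0" "g b' \<noteq> 0" "\<forall>i<d. a' i = b' i" by blast
  then show ?thesis using poly_fun_cong[OF g, of a' b'] by auto
qed

lemma poly_fun_prod_nonzero:
  assumes "finite A" "\<And>a. a \<in> A \<Longrightarrow> f a \<in> poly_fun d" "\<And>a. a \<in> A \<Longrightarrow> \<exists>x. f a x \<noteq> 0"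
  shows "\<exists>x. (\<Prod>a\<in>A. f a x) \<noteq> 0"
  using assms
proof (induction A rule: finite_induct)
  case (insert a A)
  then obtain x0 x1 where "(\<Prod>a\<in>A. f a x0) \<noteq> 0" "f a x1 \<noteq> 0" by blast
  moreover have "(\<lambda>x. \<Prod>a\<in>A. f a x) \<in> poly_fun d" using insert by (intro poly_fun_prod) auto
  ultimately obtain x where "f a x * (\<Prod>a\<in>A. f a x) \<noteq> 0"
    using poly_fun_mult_nonzero[of "f a" d] insert.prems by blast
  then show ?case using insert.hyps by auto
qed simp

lemma poly_fun_mult_cancel:
  assumes "f \<in> poly_fun d" "g \<in> poly_fun d" "q \<in> poly_fun d" "q a \<noteq> 0"
    and "\<And>x. f x * q x = g x * q x"
  shows "f x = g x"
proof -
  have "(\<lambda>x. f x - g x) \<in> poly_fun d" using assms(1,2) by (rule poly_fun_diff)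
  moreover have "(f x - g x) * q x = 0" for x using assms(5)[of x] by (simp add: left_diff_distrib)
  ultimately show ?thesis
    using poly_fun_mult_nonzero[OF _ assms(3) _ assms(4), of "\<lambda>x. f x - g x" x] by auto
qed

definition torus :: "nat \<Rightarrow> (nat \<Rightarrow> complex) set" where
  "torus d = {x. \<forall>i<d. x i \<noteq> 0}"

lemma poly_fun_nonzero_on_torus:
  assumes "f \<in> poly_fun d" "f a \<noteq> 0"
  obtains x where "x \<in> torus d" "f x \<noteq> 0"
proof -
  have "(\<lambda>x. \<Prod>i<d. x i) \<in> poly_fun d" by (intro poly_fun_prod pf_var) auto
  moreover have "(\<Prod>i<d. (\<lambda>_. 1 :: complex) i) \<noteq> 0" by simp
  ultimately obtain x where "f x * (\<Prod>i<d. x i) \<noteq> 0"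
    using poly_fun_mult_nonzero[OF assms(1) _ assms(2)] by blast
  then show ?thesis using that by (auto simp: torus_def)
qed

lemma poly_fun_eq_on_torus:
  assumes "f \<in> poly_fun d" "g \<in> poly_fun d" "\<And>x. x \<in> torus d \<Longrightarrow> f x = g x"
  shows "f x = g x"
proof (rule ccontr)
  assume "f x \<noteq> g x"
  then obtain y where "y \<in> torus d" "f y - g y \<noteq> 0"
    using poly_fun_nonzero_on_torus[OF poly_fun_diff[OF assms(1,2)], of x] by auto
  then show False using assms(3) by simp
qed

section \<open>Sign changes of the coordinates\<close>

definition flip :: "nat set \<Rightarrow> (nat \<Rightarrow> complex) \<Rightarrow> nat \<Rightarrow> complex" where
  "flip T x = (\<lambda>i. if i \<in> T then - x i else x i)"

lemma flip_empty [simp]: "flip {} x = x"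
  by (simp add: flip_def)

lemma flip_flip: "flip T (flip U x) = flip (sym_diff T U) x"
  by (auto simp: flip_def)

lemma prod_Pow_flip:
  assumes "T \<subseteq> V"
  shows "(\<Prod>U\<in>Pow V. f (flip U (flip T x))) = (\<Prod>U\<in>Pow V. f (flip U x))"
  unfolding flip_flip
  by (rule prod.reindex_bij_witness[where i = "\<lambda>U. sym_diff U T" and j = "\<lambda>U. sym_diff U T"])
     (use assms in auto)

lemma poly_fun_flip:
  assumes "f \<in> poly_fun d" shows "(\<lambda>x. f (flip T x)) \<in> poly_fun d"
proof (rule poly_fun_compose[OF assms])
  fix k assume "k < d"
  then show "(\<lambda>x. flip T x k) \<in> poly_fun d"
    unfolding flip_def by (intro poly_fun_if poly_fun_neg pf_var)
qed

lemma prod_flip: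
  "finite S \<Longrightarrow> (\<Prod>i\<in>S. flip T x i) = (-1) ^ card (S \<inter> T) * (\<Prod>i\<in>S. x i)"
proof -
  assume "finite S"
  then have "(\<Prod>i\<in>S. flip T x i) = (\<Prod>i\<in>S \<inter> T. - x i) * (\<Prod>i\<in>S - T. x i)"
    unfolding flip_def by (simp add: prod.If_cases Diff_eq)
  also have "\<dots> = (-1) ^ card (S \<inter> T) * (\<Prod>i\<in>S. x i)"
    using \<open>finite S\<close> by (simp add: prod_uminus prod.Int_Diff[of S _ T])
  finally show ?thesis .
qed

lemma sum_Pow_sign:
  assumes "finite V" "S \<subseteq> V"
  shows "(\<Sum>T\<in>Pow V. (-1 :: complex) ^ card (S \<inter> T)) = (if S = {} then 2 ^ card V else 0)"
proof -
  have "(\<Sum>T\<in>Pow V. (-1 :: complex) ^ card (S \<inter> T))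
      = (\<Sum>T\<in>Pow V. (\<Prod>i\<in>T. if i \<in> S then -1 else 1) * (\<Prod>i\<in>V - T. 1))"
  proof (intro sum.cong refl)
    fix T assume "T \<in> Pow V"
    then have "finite T" using assms(1) finite_subset by auto
    then show "(-1) ^ card (S \<inter> T) = (\<Prod>i\<in>T. if i \<in> S then -1 else 1) * (\<Prod>i\<in>V - T. 1)"
      by (simp add: prod.If_cases Int_commute)
  qed
  also have "\<dots> = (\<Prod>i\<in>V. (if i \<in> S then -1 else 1) + 1)"
    by (rule prod_add[symmetric, OF assms(1)])
  also have "\<dots> = (if S = {} then 2 ^ card V else 0)"
    using assms by (auto simp: prod_zero_iff)
  finally show ?thesis .
qed

section \<open>The generators and the action of \<open>W\<^sub>d\<close>\<close>

definition krylov :: "nat \<Rightarrow> nat \<Rightarrow> (nat \<Rightarrow> complex) \<Rightarrow> nat \<Rightarrow> complex" where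
  "krylov d k x = mat_vec d (mat_pow d (L_mat d x) k) (L_vec d x)"

lemma gens_eq_krylov:
  "gens d x k = (if k = 0 then bil d (L_vec d x) (L_vec d x)
                 else if k < d then bil d (krylov d k x) (krylov d k x) else 0)"
  by (simp add: gens_def krylov_def)

lemma gens_0: "0 < d \<Longrightarrow> gens d x 0 = x 0 ^ 2"
proof -
  assume "0 < d"
  have "gens d x 0 = (\<Sum>i<d. L_vec d x i * L_vec d x i)"
    by (simp add: gens_def bil_def)
  also have "\<dots> = (\<Sum>i<d. if i = d - 1 then x 0 ^ 2 else 0)"
    by (intro sum.cong) (auto simp: L_vec_def power2_eq_square)
  finally show ?thesis using \<open>0 < d\<close> by simp
qed

lemma poly_fun_L_mat: "(\<lambda>x. L_mat d x i j) \<in> poly_fun d"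
  unfolding L_mat_def by (intro poly_fun_if pf_var poly_fun_neg pf_const) auto

lemma poly_fun_L_vec: "0 < d \<Longrightarrow> (\<lambda>x. L_vec d x i) \<in> poly_fun d"
  unfolding L_vec_def by (intro poly_fun_if pf_var pf_const) auto

lemma poly_fun_krylov: "0 < d \<Longrightarrow> (\<lambda>x. krylov d k x i) \<in> poly_fun d"
proof -
  assume "0 < d"
  have "(\<lambda>x. mat_pow d (L_mat d x) k i j) \<in> poly_fun d" for i j
  proof (induction k arbitrary: i j)
    case 0
    show ?case by (simp add: id_mat_def pf_const)
  next
    case (Suc k)
    then show ?case
      unfolding mat_pow.simps mat_mul_def by (intro poly_fun_sum pf_mult poly_fun_L_mat) auto
  qed
  then show ?thesis
    unfolding krylov_def mat_vec_def by (intro poly_fun_sum pf_mult poly_fun_L_vec \<open>0 < d\<close>) auto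
qed

lemma poly_fun_gens:
  assumes "0 < d" shows "(\<lambda>x. gens d x k) \<in> poly_fun d"
proof -
  consider "k = 0" | "0 < k" "k < d" | "d \<le> k" by linarith
  then show ?thesis
  proof cases
    case 1
    then show ?thesis using assms by (simp add: gens_0 power2_eq_square pf_mult pf_var)
  next
    case 2
    then show ?thesis
      by (simp add: gens_eq_krylov bil_def poly_fun_sum pf_mult poly_fun_krylov assms)
  next
    case 3
    then have "(\<lambda>x. gens d x k) = (\<lambda>x. 0)" using assms by (simp add: gens_def)
    then show ?thesis by (simp add: pf_const)
  qed
qed

lemma poly_fun_gens_compose: "0 < d \<Longrightarrow> P \<in> poly_fun d \<Longrightarrow> (\<lambda>x. P (gens d x)) \<in> poly_fun d"
  by (rule poly_fun_compose[of P d]) (simp_all add: poly_fun_gens)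

lemma gens_cong:
  assumes "0 < d" "\<And>i. i < d \<Longrightarrow> x i = y i" shows "gens d x = gens d y"
proof
  fix k
  show "gens d x k = gens d y k" using poly_fun_cong[OF poly_fun_gens[OF assms(1)]] assms(2) .
qed

text \<open>A diagonal sign matrix \<open>E\<close> maps \<open>(v, M)\<close> to \<open>(E v, E M E)\<close>, hence \<open>M\<^sup>k v\<close> to
  \<open>E M\<^sup>k v\<close>, and \<open>E\<close> preserves the bilinear form.\<close>

lemma gens_sign_change:
  assumes e: "\<And>i. i < d \<Longrightarrow> e i * e i = 1"
    and x0: "y 0 = e (d - 1) * x 0"
    and xj: "\<And>j. 0 < j \<Longrightarrow> j < d \<Longrightarrow> y j = e (j - 1) * e j * x j"
  shows "gens d y = gens d x"
proof -
  have cancel: "e l * e l * z = z" if "l < d" for l z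
    using e[OF that] by simp
  have vec: "L_vec d y i = e i * L_vec d x i" for i
    unfolding L_vec_def using x0 by simp
  have mat: "L_mat d y i j = e i * e j * L_mat d x i j" for i j
    unfolding L_mat_def using xj by (auto simp: mult.commute)
  have pow: "mat_pow d (L_mat d y) k i j = e i * e j * mat_pow d (L_mat d x) k i j" for k i j
  proof (induction k arbitrary: i j)
    case 0
    show ?case using e by (simp add: id_mat_def)
  next
    case (Suc k)
    have "mat_pow d (L_mat d y) (Suc k) i j
        = (\<Sum>l<d. e l * e l * (e i * e j * (L_mat d x i l * mat_pow d (L_mat d x) k l j)))"
      unfolding mat_pow.simps mat_mul_def mat Suc by (simp only: ac_simps)
    also have "\<dots> = (\<Sum>l<d. e i * e j * (L_mat d x i l * mat_pow d (L_mat d x) k l j))"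
      by (intro sum.cong refl) (simp add: cancel)
    finally show ?case by (simp add: mat_mul_def sum_distrib_left)
  qed
  have kry: "krylov d k y = (\<lambda>i. e i * krylov d k x i)" for k
  proof
    fix i
    have "krylov d k y i = (\<Sum>j<d. e j * e j * (e i * (mat_pow d (L_mat d x) k i j * L_vec d x j)))"
      unfolding krylov_def mat_vec_def pow vec by (simp only: ac_simps)
    also have "\<dots> = (\<Sum>j<d. e i * (mat_pow d (L_mat d x) k i j * L_vec d x j))"
      by (intro sum.cong refl) (simp add: cancel)
    finally show "krylov d k y i = e i * krylov d k x i"
      by (simp add: krylov_def mat_vec_def sum_distrib_left)
  qed
  have orth: "bil d (\<lambda>i. e i * w i) (\<lambda>i. e i * w i) = bil d w w" for w
  proof -
    have "bil d (\<lambda>i. e i * w i) (\<lambda>i. e i * w i) = (\<Sum>i<d. e i * e i * (w i * w i))"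
      unfolding bil_def by (simp only: ac_simps)
    then show ?thesis
      unfolding bil_def by (simp add: cancel)
  qed
  have vec_y: "L_vec d y = (\<lambda>i. e i * L_vec d x i)"
    using vec by (rule ext)
  show ?thesis
    by (simp add: fun_eq_iff gens_eq_krylov kry vec_y orth)
qed

lemma Wd_sum_mult:
  assumes "A \<in> Wd d"
  shows "(\<Sum>j<d. A i j * f j) = (if i < d then A i i * f i else 0)"
proof -
  have "(\<Sum>j<d. A i j * f j) = (\<Sum>j<d. if j = i then A i i * f i else 0)"
    using assms by (intro sum.cong) (auto simp: Wd_def)
  then show ?thesis by simp
qed

lemma W_act_L_eq:
  assumes A: "A \<in> Wd d" and "0 < d"
  shows "W_act_L d A x i = (if i = 0 then A (d - 1) (d - 1) * x 0
                            else if i < d then A (i - 1) (i - 1) * A i i * x i else 0)"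
proof -
  have "mat_vec d A (L_vec d x) (d - 1) = A (d - 1) (d - 1) * x 0"
    unfolding mat_vec_def Wd_sum_mult[OF A] using \<open>0 < d\<close> by (simp add: L_vec_def)
  moreover have "mat_mul d A (L_mat d x) (i - 1) i = A (i - 1) (i - 1) * x i" if "0 < i" "i < d"
    unfolding mat_mul_def Wd_sum_mult[OF A] using that by (simp add: L_mat_def)
  moreover have "mat_mul d B (transp A) j i = B j i * A i i" if "i < d" for B j
    unfolding mat_mul_def transp_def using Wd_sum_mult[OF A, of i "B j"] that
    by (simp add: mult.commute)
  ultimately show ?thesis
    by (auto simp: W_act_L_def L_coord_def)
qed

lemma gens_W_act:
  assumes A: "A \<in> Wd d" and d: "0 < d"
  shows "gens d (W_act_L d A x) = gens d x"
proof (rule gens_sign_change[where e = "\<lambda>i. A i i"])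
  show "A i i * A i i = 1" if "i < d" for i
    using A that by (auto simp: Wd_def)
qed (simp_all add: W_act_L_eq[OF A d])

definition flip_sign :: "nat set \<Rightarrow> nat \<Rightarrow> complex" where
  "flip_sign T i = (if i \<in> T then -1 else 1)"

lemma flip_sign_sq [simp]: "flip_sign T i ^ 2 = 1"
  by (simp add: flip_sign_def)

text \<open>The diagonal \<open>e\<close> of a sign matrix realising \<open>flip T\<close> has to solve
  \<open>e\<^sub>d\<^sub>-\<^sub>1 = \<epsilon>\<^sub>0\<close> and \<open>e\<^sub>j\<^sub>-\<^sub>1 e\<^sub>j = \<epsilon>\<^sub>j\<close>, where \<open>\<epsilon> = flip_sign T\<close>;
  it is obtained by telescoping from the last entry.\<close>

lemma Wd_realizes_flip:
  assumes "0 < d"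
  obtains A where "A \<in> Wd d" "\<And>x i. i < d \<Longrightarrow> W_act_L d A x i = flip T x i"
proof -
  define e where "e j = flip_sign T 0 * (\<Prod>i\<in>{Suc j..<d}. flip_sign T i)" for j
  have e_sq: "e j ^ 2 = 1" for j
    by (simp add: e_def power_mult_distrib prod_power_distrib)
  have e_step: "e (j - 1) * e j = flip_sign T j" if "0 < j" "j < d" for j
  proof -
    have "e (j - 1) = flip_sign T j * e j"
      using that by (simp add: e_def prod.atLeast_Suc_lessThan algebra_simps)
    then show ?thesis
      by (simp add: e_sq algebra_simps flip: power2_eq_square)
  qed
  define A where "A i j = (if i = j \<and> i < d then e i else 0)" for i j
  have A: "A \<in> Wd d"
    using e_sq by (auto simp: Wd_def A_def power2_eq_1_iff)
  have "W_act_L d A x i = flip T x i" if "i < d" for x i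
    using that assms e_step
    by (auto simp: W_act_L_eq[OF A assms] A_def e_def flip_def flip_sign_def)
  with A show ?thesis using that by blast
qed

lemma gens_flip:
  assumes "0 < d" shows "gens d (flip T x) = gens d x"
proof -
  obtain A where A: "A \<in> Wd d" "\<And>x i. i < d \<Longrightarrow> W_act_L d A x i = flip T x i"
    using Wd_realizes_flip[OF assms, where T = T] by blast
  have "gens d (flip T x) = gens d (W_act_L d A x)"
    by (rule gens_cong[OF assms]) (simp add: A(2))
  also have "\<dots> = gens d x"
    using gens_W_act[OF A(1) assms] .
  finally show ?thesis .
qed

section \<open>Polynomials in the squares\<close>

inductive_set sq_poly :: "nat set \<Rightarrow> ((nat \<Rightarrow> complex) \<Rightarrow> complex) set" for V where
  sq_const: "(\<lambda>x. c) \<in> sq_poly V"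
| sq_var: "j \<in> V \<Longrightarrow> (\<lambda>x. x j ^ 2) \<in> sq_poly V"
| sq_add: "p \<in> sq_poly V \<Longrightarrow> q \<in> sq_poly V \<Longrightarrow> (\<lambda>x. p x + q x) \<in> sq_poly V"
| sq_mult: "p \<in> sq_poly V \<Longrightarrow> q \<in> sq_poly V \<Longrightarrow> (\<lambda>x. p x * q x) \<in> sq_poly V"

lemma sq_poly_prod:
  "finite A \<Longrightarrow> (\<And>a. a \<in> A \<Longrightarrow> f a \<in> sq_poly V) \<Longrightarrow> (\<lambda>x. \<Prod>a\<in>A. f a x) \<in> sq_poly V"
  by (induction A rule: finite_induct) (auto intro: sq_mult sq_const[of 1, simplified])

lemma sq_poly_flip: "c \<in> sq_poly V \<Longrightarrow> c (flip T x) = c x"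
  by (induction c rule: sq_poly.induct) (simp_all add: flip_def)

inductive_set mon_span :: "nat set \<Rightarrow> ((nat \<Rightarrow> complex) \<Rightarrow> complex) set" for V where
  mon_span_zero: "(\<lambda>x. 0) \<in> mon_span V"
| mon_span_mon: "S \<subseteq> V \<Longrightarrow> c \<in> sq_poly V \<Longrightarrow> (\<lambda>x. (\<Prod>i\<in>S. x i) * c x) \<in> mon_span V"
| mon_span_add: "f \<in> mon_span V \<Longrightarrow> g \<in> mon_span V \<Longrightarrow> (\<lambda>x. f x + g x) \<in> mon_span V"

lemma prod_mult_sym_diff:
  assumes "finite S" "finite U"
  shows "(\<Prod>i\<in>S. x i) * (\<Prod>i\<in>U. x i) = (\<Prod>i\<in>sym_diff S U. x i) * (\<Prod>i\<in>S \<inter> U. x i ^ 2)"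
proof -
  have "(\<Prod>i\<in>S. x i) * (\<Prod>i\<in>U. x i)
      = ((\<Prod>i\<in>S - U. x i) * (\<Prod>i\<in>U - S. x i)) * ((\<Prod>i\<in>S \<inter> U. x i) * (\<Prod>i\<in>S \<inter> U. x i))"
    using prod.Int_Diff[OF assms(1), of x U] prod.Int_Diff[OF assms(2), of x S]
    by (simp only: Int_commute[of U S] ac_simps)
  also have "\<dots> = (\<Prod>i\<in>sym_diff S U. x i) * (\<Prod>i\<in>S \<inter> U. x i ^ 2)"
    using assms by (simp add: prod.union_disjoint[symmetric] power2_eq_square prod.distrib Diff_Int_distrib2)
  finally show ?thesis .
qed

lemma mon_span_mult:
  assumes V: "finite V" and f: "f \<in> mon_span V" and g: "g \<in> mon_span V"
  shows "(\<lambda>x. f x * g x) \<in> mon_span V"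
  using f
proof (induction f rule: mon_span.induct)
  case mon_span_zero
  show ?case by (simp add: mon_span.mon_span_zero)
next
  case (mon_span_mon S c)
  from g show ?case
  proof (induction g rule: mon_span.induct)
    case mon_span_zero
    show ?case by (simp add: mon_span.mon_span_zero)
  next
    case (mon_span_mon U c')
    have fin: "finite S" "finite U"
      using V mon_span_mon.hyps(1) \<open>S \<subseteq> V\<close> finite_subset by auto
    have "(\<Prod>i\<in>S. x i) * c x * ((\<Prod>i\<in>U. x i) * c' x)
        = ((\<Prod>i\<in>S. x i) * (\<Prod>i\<in>U. x i)) * (c x * c' x)" for x
      by (simp only: ac_simps)
    then have "(\<lambda>x. (\<Prod>i\<in>S. x i) * c x * ((\<Prod>i\<in>U. x i) * c' x))
        = (\<lambda>x. (\<Prod>i\<in>sym_diff S U. x i) * ((\<Prod>i\<in>S \<inter> U. x i ^ 2) * (c x * c' x)))"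
      by (simp only: prod_mult_sym_diff[OF fin] mult.assoc)
    also have "\<dots> \<in> mon_span V"
      using \<open>S \<subseteq> V\<close> mon_span_mon.hyps \<open>c \<in> sq_poly V\<close> fin
      by (intro mon_span.mon_span_mon sq_mult sq_poly_prod sq_var) auto
    finally show ?case .
  next
    case (mon_span_add g1 g2)
    then show ?case
      by (simp add: distrib_left mon_span.mon_span_add)
  qed
next
  case (mon_span_add f1 f2)
  then show ?case
    by (simp add: distrib_right mon_span.mon_span_add)
qed

definition proj :: "nat set \<Rightarrow> (nat \<Rightarrow> complex) \<Rightarrow> nat \<Rightarrow> complex" where
  "proj V x = (\<lambda>i. if i \<in> V then x i else 0)"

definition depends_only_on :: "nat set \<Rightarrow> ((nat \<Rightarrow> complex) \<Rightarrow> complex) \<Rightarrow> bool" where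
  "depends_only_on V f \<longleftrightarrow> (\<forall>x. f (proj V x) = f x)"

lemma depends_only_on_const: "depends_only_on V (\<lambda>x. c)"
  by (simp add: depends_only_on_def)

lemma depends_only_on_var: "j \<in> V \<Longrightarrow> depends_only_on V (\<lambda>x. x j)"
  by (simp add: depends_only_on_def proj_def)

lemma depends_only_on_mult:
  "depends_only_on V f \<Longrightarrow> depends_only_on V g \<Longrightarrow> depends_only_on V (\<lambda>x. f x * g x)"
  by (simp add: depends_only_on_def)

lemma depends_only_on_diff:
  "depends_only_on V f \<Longrightarrow> depends_only_on V g \<Longrightarrow> depends_only_on V (\<lambda>x. f x - g x)"
  by (simp add: depends_only_on_def)

lemma depends_only_on_if:
  "(b \<Longrightarrow> depends_only_on V f) \<Longrightarrow> (\<not> b \<Longrightarrow> depends_only_on V g)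
    \<Longrightarrow> depends_only_on V (\<lambda>x. if b then f x else g x)"
  by (cases b) simp_all

lemma depends_only_on_mono:
  assumes "depends_only_on V f" "V \<subseteq> W" shows "depends_only_on W f"
  unfolding depends_only_on_def
proof
  fix x
  have "proj V (proj W x) = proj V x"
    using assms(2) by (auto simp: proj_def fun_eq_iff)
  then have "f (proj V (proj W x)) = f (proj V x)" by simp
  then show "f (proj W x) = f x"
    using assms(1) by (simp add: depends_only_on_def)
qed

lemma depends_only_on_prod: "S \<subseteq> V \<Longrightarrow> depends_only_on V (\<lambda>x. \<Prod>i\<in>S. x i)"
  unfolding depends_only_on_def proj_def by (auto intro!: prod.cong)

lemma poly_fun_proj_mon_span:
  assumes V: "finite V" and F: "F \<in> poly_fun d"
  shows "(\<lambda>x. F (proj V x)) \<in> mon_span V"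
  using F
proof (induction F rule: poly_fun.induct)
  case (pf_const c)
  show ?case
    using mon_span_mon[OF empty_subsetI sq_const[of c]] by simp
next
  case (pf_var i)
  show ?case
  proof (cases "i \<in> V")
    case True
    then show ?thesis
      using mon_span_mon[of "{i}" V "\<lambda>x. 1"] by (simp add: proj_def sq_const)
  next
    case False
    then show ?thesis by (simp add: proj_def mon_span_zero)
  qed
next
  case (pf_add p q)
  show ?case using pf_add.IH by (rule mon_span_add)
next
  case (pf_mult p q)
  show ?case using pf_mult.IH by (rule mon_span_mult[OF V])
qed

text \<open>Averaging over all sign changes of the variables in \<open>V\<close> kills every monomial
  except the constant one.\<close>

lemma mon_span_sign_average:
  assumes V: "finite V" and f: "f \<in> mon_span V"
  shows "(\<lambda>x. \<Sum>T\<in>Pow V. f (flip T x)) \<in> sq_poly V"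
  using f
proof (induction f rule: mon_span.induct)
  case mon_span_zero
  show ?case using sq_const[of 0] by simp
next
  case (mon_span_mon S c)
  have "finite S" using V mon_span_mon.hyps(1) finite_subset by auto
  have "(\<Sum>T\<in>Pow V. (\<Prod>i\<in>S. flip T x i) * c (flip T x))
      = (\<Prod>i\<in>S. x i) * c x * (\<Sum>T\<in>Pow V. (-1) ^ card (S \<inter> T))" for x
    by (simp add: prod_flip[OF \<open>finite S\<close>] sq_poly_flip[OF mon_span_mon.hyps(2)]
        sum_distrib_left algebra_simps)
  then have "(\<lambda>x. \<Sum>T\<in>Pow V. (\<Prod>i\<in>S. flip T x i) * c (flip T x))
      = (if S = {} then (\<lambda>x. 2 ^ card V * c x) else (\<lambda>x. 0))"
    by (auto simp: sum_Pow_sign[OF V mon_span_mon.hyps(1)])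
  then show ?case
    using mon_span_mon.hyps by (simp add: sq_mult sq_const)
next
  case (mon_span_add f g)
  then show ?case by (simp add: sum.distrib sq_add)
qed

lemma sign_invariant_sq_poly:
  assumes V: "finite V" and F: "F \<in> poly_fun d" and dep: "depends_only_on V F"
    and inv: "\<And>T x. T \<subseteq> V \<Longrightarrow> F (flip T x) = F x"
  shows "F \<in> sq_poly V"
proof -
  have "F (proj V (flip T x)) = F x" if "T \<subseteq> V" for T x
    using dep inv[OF that] by (simp add: depends_only_on_def)
  then have avg: "(\<Sum>T\<in>Pow V. F (proj V (flip T x))) = 2 ^ card V * F x" for x
    using V by (simp add: card_Pow)
  have "F = (\<lambda>x. 1 / 2 ^ card V * (\<Sum>T\<in>Pow V. F (proj V (flip T x))))"
    by (simp add: avg)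
  also have "\<dots> \<in> sq_poly V"
    by (intro sq_mult sq_const mon_span_sign_average[OF V] poly_fun_proj_mon_span[OF V F])
  finally show ?thesis .
qed

section \<open>Rational functions of the generators\<close>

text \<open>Rational functions of the generators, as functions on the torus, where the squares
  \<open>x\<^sub>j\<^sup>2\<close> that will occur as denominators do not vanish.\<close>

definition gen_quot :: "nat \<Rightarrow> ((nat \<Rightarrow> complex) \<Rightarrow> complex) set" where
  "gen_quot d = {G. \<exists>P\<in>poly_fun d. \<exists>Q\<in>poly_fun d.
      \<forall>x\<in>torus d. Q (gens d x) \<noteq> 0 \<and> G x = P (gens d x) / Q (gens d x)}"

lemma gen_quotI:
  assumes "P \<in> poly_fun d" "Q \<in> poly_fun d" "\<And>x. x \<in> torus d \<Longrightarrow> Q (gens d x) \<noteq> 0"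
    and "\<And>x. x \<in> torus d \<Longrightarrow> G x = P (gens d x) / Q (gens d x)"
  shows "G \<in> gen_quot d"
  using assms unfolding gen_quot_def by blast

lemma gen_quotE:
  assumes "G \<in> gen_quot d"
  obtains P Q where "P \<in> poly_fun d" "Q \<in> poly_fun d" "\<And>x. x \<in> torus d \<Longrightarrow> Q (gens d x) \<noteq> 0"
    "\<And>x. x \<in> torus d \<Longrightarrow> G x = P (gens d x) / Q (gens d x)"
  using assms unfolding gen_quot_def by blast

lemma gen_quot_const: "(\<lambda>x. c) \<in> gen_quot d"
  by (rule gen_quotI[OF pf_const[of c] pf_const[of 1]]) simp_all

lemma gen_quot_gens: "k < d \<Longrightarrow> (\<lambda>x. gens d x k) \<in> gen_quot d"
  by (rule gen_quotI[OF pf_var[of k] pf_const[of 1]]) simp_all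

lemma gen_quot_cong: "G \<in> gen_quot d \<Longrightarrow> (\<And>x. x \<in> torus d \<Longrightarrow> F x = G x) \<Longrightarrow> F \<in> gen_quot d"
  by (elim gen_quotE, rule gen_quotI) auto

lemma gen_quot_add:
  assumes "F \<in> gen_quot d" "G \<in> gen_quot d"
  shows "(\<lambda>x. F x + G x) \<in> gen_quot d"
proof -
  obtain P1 Q1 P2 Q2 where "P1 \<in> poly_fun d" "Q1 \<in> poly_fun d" "P2 \<in> poly_fun d" "Q2 \<in> poly_fun d"
    and "\<And>x. x \<in> torus d \<Longrightarrow> Q1 (gens d x) \<noteq> 0 \<and> Q2 (gens d x) \<noteq> 0"
    and "\<And>x. x \<in> torus d \<Longrightarrow> F x = P1 (gens d x) / Q1 (gens d x) \<and> G x = P2 (gens d x) / Q2 (gens d x)"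
    using assms by (elim gen_quotE) metis
  then show ?thesis
    by (intro gen_quotI[of "\<lambda>z. P1 z * Q2 z + P2 z * Q1 z" d "\<lambda>z. Q1 z * Q2 z"])
       (auto intro: pf_add pf_mult simp: add_frac_eq)
qed

lemma gen_quot_diff:
  assumes "F \<in> gen_quot d" "G \<in> gen_quot d"
  shows "(\<lambda>x. F x - G x) \<in> gen_quot d"
proof -
  obtain P1 Q1 P2 Q2 where "P1 \<in> poly_fun d" "Q1 \<in> poly_fun d" "P2 \<in> poly_fun d" "Q2 \<in> poly_fun d"
    and "\<And>x. x \<in> torus d \<Longrightarrow> Q1 (gens d x) \<noteq> 0 \<and> Q2 (gens d x) \<noteq> 0"
    and "\<And>x. x \<in> torus d \<Longrightarrow> F x = P1 (gens d x) / Q1 (gens d x) \<and> G x = P2 (gens d x) / Q2 (gens d x)"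
    using assms by (elim gen_quotE) metis
  then show ?thesis
    by (intro gen_quotI[of "\<lambda>z. P1 z * Q2 z - P2 z * Q1 z" d "\<lambda>z. Q1 z * Q2 z"])
       (auto intro: poly_fun_diff pf_mult simp: diff_frac_eq)
qed

lemma gen_quot_mult:
  assumes "F \<in> gen_quot d" "G \<in> gen_quot d"
  shows "(\<lambda>x. F x * G x) \<in> gen_quot d"
proof -
  obtain P1 Q1 P2 Q2 where "P1 \<in> poly_fun d" "Q1 \<in> poly_fun d" "P2 \<in> poly_fun d" "Q2 \<in> poly_fun d"
    and "\<And>x. x \<in> torus d \<Longrightarrow> Q1 (gens d x) \<noteq> 0 \<and> Q2 (gens d x) \<noteq> 0"
    and "\<And>x. x \<in> torus d \<Longrightarrow> F x = P1 (gens d x) / Q1 (gens d x) \<and> G x = P2 (gens d x) / Q2 (gens d x)"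
    using assms by (elim gen_quotE) metis
  then show ?thesis
    by (intro gen_quotI[of "\<lambda>z. P1 z * P2 z" d "\<lambda>z. Q1 z * Q2 z"]) (auto intro: pf_mult)
qed

lemma gen_quot_divide:
  assumes "F \<in> gen_quot d" "G \<in> gen_quot d" "\<And>x. x \<in> torus d \<Longrightarrow> G x \<noteq> 0"
  shows "(\<lambda>x. F x / G x) \<in> gen_quot d"
proof -
  obtain P1 Q1 P2 Q2 where "P1 \<in> poly_fun d" "Q1 \<in> poly_fun d" "P2 \<in> poly_fun d" "Q2 \<in> poly_fun d"
    and "\<And>x. x \<in> torus d \<Longrightarrow> Q1 (gens d x) \<noteq> 0 \<and> Q2 (gens d x) \<noteq> 0"
    and "\<And>x. x \<in> torus d \<Longrightarrow> F x = P1 (gens d x) / Q1 (gens d x) \<and> G x = P2 (gens d x) / Q2 (gens d x)"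
    using assms(1,2) by (elim gen_quotE) metis
  with assms(3) show ?thesis
    by (intro gen_quotI[of "\<lambda>z. P1 z * Q2 z" d "\<lambda>z. Q1 z * P2 z"]) (auto intro: pf_mult)
qed

lemma sq_poly_gen_quot:
  assumes "c \<in> sq_poly V" "\<And>j. j \<in> V \<Longrightarrow> (\<lambda>x. x j ^ 2) \<in> gen_quot d"
  shows "c \<in> gen_quot d"
  using assms
  by (induction c rule: sq_poly.induct) (auto intro: gen_quot_const gen_quot_add gen_quot_mult)

lemma gen_quot_fraction:
  assumes "F \<in> gen_quot d" "G \<in> gen_quot d" "x0 \<in> torus d" "G x0 \<noteq> 0"
  obtains P Q where "P \<in> poly_fun d" "Q \<in> poly_fun d" "Q (gens d x0) \<noteq> 0"
    "\<And>x. x \<in> torus d \<Longrightarrow> F x * Q (gens d x) = G x * P (gens d x)"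
proof -
  obtain P1 Q1 P2 Q2 where "P1 \<in> poly_fun d" "Q1 \<in> poly_fun d" "P2 \<in> poly_fun d" "Q2 \<in> poly_fun d"
    and "\<And>x. x \<in> torus d \<Longrightarrow> Q1 (gens d x) \<noteq> 0 \<and> Q2 (gens d x) \<noteq> 0"
    and "\<And>x. x \<in> torus d \<Longrightarrow> F x = P1 (gens d x) / Q1 (gens d x) \<and> G x = P2 (gens d x) / Q2 (gens d x)"
    using assms(1,2) by (elim gen_quotE) metis
  with assms(3,4) show ?thesis
    by (intro that[of "\<lambda>z. P1 z * Q2 z" "\<lambda>z. Q1 z * P2 z"]) (auto intro: pf_mult)
qed

section \<open>The vectors \<open>M\<^sup>k v\<close>\<close>

lemma krylov_0: "krylov d 0 x i = (if i < d then L_vec d x i else 0)"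
proof -
  have "krylov d 0 x i = (\<Sum>j<d. if j = i then (if i < d then L_vec d x i else 0) else 0)"
    unfolding krylov_def mat_pow.simps mat_vec_def id_mat_def by (rule sum.cong) auto
  then show ?thesis
    by (simp add: sum.delta')
qed

lemma mat_vec_L_mat:
  "mat_vec d (L_mat d x) w i = (if i + 1 < d then x (i + 1) * w (i + 1) else 0)
                             - (if 0 < i \<and> i < d then x i * w (i - 1) else 0)"
proof -
  have "mat_vec d (L_mat d x) w i
      = (\<Sum>j<d. (if j = i + 1 then (if i + 1 < d then x (i + 1) * w (i + 1) else 0) else 0)
              - (if j = i - 1 then (if 0 < i \<and> i < d then x i * w (i - 1) else 0) else 0))"
    unfolding mat_vec_def by (rule sum.cong) (auto simp: L_mat_def)
  also have "\<dots> = (if i + 1 < d then x (i + 1) * w (i + 1) else 0)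
                 - (if 0 < i \<and> i < d then x i * w (i - 1) else 0)"
    by (auto simp: sum_subtractf sum.delta')
  finally show ?thesis .
qed

lemma krylov_Suc:
  "krylov d (Suc k) x i = (if i + 1 < d then x (i + 1) * krylov d k x (i + 1) else 0)
                        - (if 0 < i \<and> i < d then x i * krylov d k x (i - 1) else 0)"
proof -
  have "krylov d (Suc k) x i
      = (\<Sum>j<d. \<Sum>l<d. L_mat d x i l * (mat_pow d (L_mat d x) k l j * L_vec d x j))"
    by (simp add: krylov_def mat_vec_def mat_mul_def sum_distrib_right mult.assoc)
  also have "\<dots> = (\<Sum>l<d. \<Sum>j<d. L_mat d x i l * (mat_pow d (L_mat d x) k l j * L_vec d x j))"
    by (rule sum.swap)
  also have "\<dots> = mat_vec d (L_mat d x) (krylov d k x) i"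
    by (simp add: krylov_def mat_vec_def sum_distrib_left)
  finally show ?thesis
    by (simp add: mat_vec_L_mat)
qed

lemma krylov_vanish: "i + k + 1 < d \<Longrightarrow> krylov d k x i = 0"
proof (induction k arbitrary: i)
  case 0
  then show ?case by (simp add: krylov_0 L_vec_def)
next
  case (Suc k)
  then show ?case by (simp add: krylov_Suc)
qed

text \<open>The variables \<open>c\<^sub>d, c\<^sub>d\<^sub>-\<^sub>k\<^sub>,\<^sub>d\<^sub>-\<^sub>k\<^sub>+\<^sub>1, \<dots>, c\<^sub>d\<^sub>-\<^sub>1\<^sub>,\<^sub>d\<close> in the 0-based coordinates:
  their product is the lowest nonzero entry of \<open>M\<^sup>k v\<close>.\<close>

definition lead_vars :: "nat \<Rightarrow> nat \<Rightarrow> nat set" where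
  "lead_vars d k = insert 0 {d - k..<d}"

lemma finite_lead_vars [simp]: "finite (lead_vars d k)"
  by (simp add: lead_vars_def)

lemma lead_vars_Suc: "Suc k < d \<Longrightarrow> lead_vars d (Suc k) = insert (d - Suc k) (lead_vars d k)"
  by (auto simp: lead_vars_def)

lemma krylov_lead: "k < d \<Longrightarrow> krylov d k x (d - Suc k) = (\<Prod>j\<in>lead_vars d k. x j)"
proof (induction k)
  case 0
  then show ?case by (simp add: krylov_0 L_vec_def lead_vars_def)
next
  case (Suc k)
  have "krylov d k x (d - Suc (Suc k) - 1) = 0" if "0 < d - Suc (Suc k)"
    using that by (intro krylov_vanish) linarith
  moreover have "d - Suc (Suc k) + 1 = d - Suc k" "d - Suc k \<notin> lead_vars d k"
    using Suc.prems by (auto simp: lead_vars_def)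
  ultimately show ?case
    using Suc by (auto simp: krylov_Suc lead_vars_Suc)
qed

lemma krylov_depends:
  "k < d \<Longrightarrow> d - k \<le> i \<Longrightarrow> i < d \<Longrightarrow> depends_only_on (lead_vars d (k - 1)) (\<lambda>x. krylov d k x i)"
proof (induction k arbitrary: i)
  case 0
  then show ?case by simp
next
  case (Suc k)
  let ?V = "lead_vars d k"
  have IH: "depends_only_on ?V (\<lambda>x. krylov d k x j)" if "d - k \<le> j" "j < d" for j
  proof (rule depends_only_on_mono)
    show "depends_only_on (lead_vars d (k - 1)) (\<lambda>x. krylov d k x j)"
      using Suc.IH[OF _ that] Suc.prems(1) by simp
  qed (auto simp: lead_vars_def)
  have lead: "depends_only_on ?V (\<lambda>x. krylov d k x (d - Suc k))"
    using Suc.prems(1) by (simp add: krylov_lead depends_only_on_prod)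
  have var: "depends_only_on ?V (\<lambda>x. x j)" if "d - k \<le> j" "j < d" for j
    using that by (intro depends_only_on_var) (simp add: lead_vars_def)
  show ?case
    unfolding krylov_Suc diff_Suc_1
  proof (intro depends_only_on_diff depends_only_on_if depends_only_on_const)
    assume "i + 1 < d"
    then show "depends_only_on ?V (\<lambda>x. x (i + 1) * krylov d k x (i + 1))"
      using Suc.prems by (intro depends_only_on_mult var IH) auto
  next
    assume i: "0 < i \<and> i < d"
    consider "i = d - Suc k" | "i = d - k" | "d - k < i" using Suc.prems by linarith
    then show "depends_only_on ?V (\<lambda>x. x i * krylov d k x (i - 1))"
    proof cases
      case 1
      then have "krylov d k x (i - 1) = 0" for x
        using i by (intro krylov_vanish) linarith
      then show ?thesis by (simp add: depends_only_on_const)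
    next
      case 2
      then show ?thesis
        using lead Suc.prems by (auto intro!: depends_only_on_mult var)
    next
      case 3
      then show ?thesis
        using Suc.prems by (intro depends_only_on_mult var IH) auto
    qed
  qed
qed

definition krylov_tail :: "nat \<Rightarrow> nat \<Rightarrow> (nat \<Rightarrow> complex) \<Rightarrow> complex" where
  "krylov_tail d k x = (\<Sum>i\<in>{d - k..<d}. krylov d k x i ^ 2)"

lemma gens_split:
  assumes "0 < k" "k < d"
  shows "gens d x k = (\<Prod>j\<in>lead_vars d k. x j) ^ 2 + krylov_tail d k x"
proof -
  let ?f = "\<lambda>i. krylov d k x i ^ 2"
  have split: "d - k = Suc (d - Suc k)"
    using assms by simp
  have "gens d x k = (\<Sum>i<d - k. ?f i) + krylov_tail d k x"
    using assms sum.atLeastLessThan_concat[of 0 "d - k" d ?f]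
    by (simp add: gens_eq_krylov bil_def krylov_tail_def atLeast0LessThan power2_eq_square)
  also have "(\<Sum>i<d - k. ?f i) = (\<Sum>i<d - Suc k. ?f i) + ?f (d - Suc k)"
    unfolding split by (simp only: sum.lessThan_Suc)
  also have "(\<Sum>i<d - Suc k. ?f i) = 0"
    by (intro sum.neutral) (auto simp: krylov_vanish)
  finally show ?thesis
    using assms by (simp add: krylov_lead)
qed

lemma krylov_tail_sq_poly:
  assumes "0 < k" "k < d"
  shows "krylov_tail d k \<in> sq_poly (lead_vars d (k - 1))"
proof (rule sign_invariant_sq_poly)
  show "krylov_tail d k \<in> poly_fun d"
    using assms unfolding krylov_tail_def[abs_def] power2_eq_square
    by (intro poly_fun_sum pf_mult poly_fun_krylov) auto
  show "depends_only_on (lead_vars d (k - 1)) (krylov_tail d k)"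
    unfolding depends_only_on_def krylov_tail_def
  proof (intro allI sum.cong refl)
    fix x :: "nat \<Rightarrow> complex" and i
    assume "i \<in> {d - k..<d}"
    then show "krylov d k (proj (lead_vars d (k - 1)) x) i ^ 2 = krylov d k x i ^ 2"
      using krylov_depends[OF assms(2), of i] by (simp add: depends_only_on_def)
  qed
  show "krylov_tail d k (flip T x) = krylov_tail d k x" for T x
  proof -
    have "((-1 :: complex) ^ n) ^ 2 = 1" for n
      by (simp add: power2_eq_square flip: power_mult_distrib)
    then have "(\<Prod>j\<in>lead_vars d k. flip T x j) ^ 2 = (\<Prod>j\<in>lead_vars d k. x j) ^ 2"
      by (simp add: prod_flip power_mult_distrib)
    then show ?thesis
      using gens_split[OF assms, of "flip T x"] gens_split[OF assms, of x] gens_flip[of d T x] assms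
      by simp
  qed
qed simp

lemma sq_gen_quot_step:
  assumes "0 < k" "k < d" "\<And>j. j \<in> lead_vars d (k - 1) \<Longrightarrow> (\<lambda>x. x j ^ 2) \<in> gen_quot d"
  shows "(\<lambda>x. x (d - k) ^ 2) \<in> gen_quot d"
proof (rule gen_quot_cong)
  let ?V = "lead_vars d (k - 1)"
  have V: "lead_vars d k = insert (d - k) ?V" "d - k \<notin> ?V"
    using assms(1,2) lead_vars_Suc[of "k - 1" d] by (auto simp: lead_vars_def)
  have "(\<lambda>x. gens d x k - krylov_tail d k x) \<in> gen_quot d"
  proof (rule gen_quot_diff)
    show "(\<lambda>x. gens d x k) \<in> gen_quot d"
      using assms(2) by (rule gen_quot_gens)
    show "krylov_tail d k \<in> gen_quot d"
      using krylov_tail_sq_poly[OF assms(1,2)] assms(3) by (rule sq_poly_gen_quot)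
  qed
  moreover have "(\<lambda>x. \<Prod>j\<in>?V. x j ^ 2) \<in> gen_quot d"
  proof (rule sq_poly_gen_quot)
    show "(\<lambda>x. \<Prod>j\<in>?V. x j ^ 2) \<in> sq_poly ?V"
      by (intro sq_poly_prod sq_var) auto
  qed (rule assms(3))
  moreover have nonzero: "(\<Prod>j\<in>?V. x j ^ 2) \<noteq> 0" if "x \<in> torus d" for x
    using that assms(2) by (auto simp: torus_def lead_vars_def)
  ultimately show "(\<lambda>x. (gens d x k - krylov_tail d k x) / (\<Prod>j\<in>?V. x j ^ 2)) \<in> gen_quot d"
    by (rule gen_quot_divide)
  show "x (d - k) ^ 2 = (gens d x k - krylov_tail d k x) / (\<Prod>j\<in>?V. x j ^ 2)" if "x \<in> torus d" for x
  proof -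
    have "gens d x k - krylov_tail d k x = (\<Prod>j\<in>lead_vars d k. x j ^ 2)"
      using assms(1,2) by (simp add: gens_split prod_power_distrib)
    also have "\<dots> = x (d - k) ^ 2 * (\<Prod>j\<in>?V. x j ^ 2)"
      using V by simp
    finally show ?thesis
      using nonzero[OF that] by simp
  qed
qed

lemma sq_gen_quot:
  assumes "j < d" shows "(\<lambda>x. x j ^ 2) \<in> gen_quot d"
proof -
  have "\<forall>j\<in>lead_vars d k. (\<lambda>x. x j ^ 2) \<in> gen_quot d" if "k < d" for k
    using that
  proof (induction k)
    case 0
    then have "(\<lambda>x. x 0 ^ 2) = (\<lambda>x. gens d x 0)" by (simp add: gens_0)
    then show ?case using gen_quot_gens[OF 0] by (simp add: lead_vars_def)
  next
    case (Suc k)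
    then show ?case
      using sq_gen_quot_step[of "Suc k" d] by (simp add: lead_vars_Suc)
  qed
  from this[of "d - 1"] have "\<forall>j\<in>lead_vars d (d - 1). (\<lambda>x. x j ^ 2) \<in> gen_quot d"
    using assms by simp
  moreover have "lead_vars d (d - 1) = {..<d}"
    using assms by (auto simp: lead_vars_def)
  ultimately show ?thesis
    using assms by simp
qed

section \<open>Invariant rational functions\<close>

lemma W_invariant_flip:
  assumes "0 < d" "p \<in> poly_fun d" "q \<in> poly_fun d" "W_invariant d (p, q)"
  shows "p (flip T x) * q x = p x * q (flip T x)"
proof -
  obtain A where A: "A \<in> Wd d" "\<And>x i. i < d \<Longrightarrow> W_act_L d A x i = flip T x i"
    using Wd_realizes_flip[OF assms(1), where T = T] by blast
  have "p (W_act_L d A x) = p (flip T x)"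
    by (rule poly_fun_cong[OF assms(2)]) (simp add: A(2))
  moreover have "q (W_act_L d A x) = q (flip T x)"
    by (rule poly_fun_cong[OF assms(3)]) (simp add: A(2))
  moreover have "p (W_act_L d A x) * q x = p x * q (W_act_L d A x)"
    using assms(4) A(1) by (simp add: W_invariant_def same_ratfun_def)
  ultimately show ?thesis by simp
qed

lemma sign_invariant_gen_quot:
  assumes "0 < d" "F \<in> poly_fun d" "\<And>T x. T \<subseteq> {..<d} \<Longrightarrow> F (flip T x) = F x"
  shows "F \<in> gen_quot d"
proof (rule sq_poly_gen_quot)
  have "depends_only_on {..<d} F"
    unfolding depends_only_on_def
  proof
    show "F (proj {..<d} x) = F x" for x
      by (rule poly_fun_cong[OF assms(2)]) (simp add: proj_def)
  qed
  then show "F \<in> sq_poly {..<d}"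
    by (rule sign_invariant_sq_poly[OF finite_lessThan assms(2)]) (rule assms(3))
qed (rule sq_gen_quot, simp)

text \<open>Multiplying numerator and denominator by all sign-flipped copies of the denominator makes
  both of them sign-invariant.\<close>

lemma sign_invariant_fraction:
  assumes p: "p \<in> poly_fun d" and q: "q \<in> poly_fun d" and "q a \<noteq> 0"
    and inv: "\<And>T x. T \<subseteq> {..<d} \<Longrightarrow> p (flip T x) * q x = p x * q (flip T x)"
  obtains N D where "N \<in> poly_fun d" "D \<in> poly_fun d" "\<exists>b. D b \<noteq> 0"
    "\<And>T x. T \<subseteq> {..<d} \<Longrightarrow> N (flip T x) = N x"
    "\<And>T x. T \<subseteq> {..<d} \<Longrightarrow> D (flip T x) = D x"
    "\<And>x. p x * D x = N x * q x"
proof -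
  define C where "C x = (\<Prod>T\<in>Pow {..<d} - {{}}. q (flip T x))" for x
  define D where "D x = (\<Prod>T\<in>Pow {..<d}. q (flip T x))" for x
  define N where "N x = p x * C x" for x
  have D_eq: "D x = q x * C x" for x
    unfolding D_def C_def by (subst prod.remove[of _ "{}"]) auto
  have C: "C \<in> poly_fun d" and D: "D \<in> poly_fun d"
    unfolding C_def[abs_def] D_def[abs_def] by (auto intro!: poly_fun_prod poly_fun_flip q)
  have N: "N \<in> poly_fun d"
    unfolding N_def[abs_def] using p C by (rule pf_mult)
  have D_inv: "D (flip T x) = D x" if "T \<subseteq> {..<d}" for T x
    unfolding D_def using that by (rule prod_Pow_flip)
  have N_inv: "N (flip T x) = N x" if "T \<subseteq> {..<d}" for T x
  proof (rule poly_fun_mult_cancel[OF poly_fun_flip[OF N] N q \<open>q a \<noteq> 0\<close>])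
    fix y
    have "N (flip T y) * q y = p (flip T y) * q y * C (flip T y)"
      by (simp add: N_def ac_simps)
    also have "\<dots> = p y * D (flip T y)"
      using inv[OF that, of y] by (simp add: D_eq ac_simps)
    also have "\<dots> = N y * q y"
      unfolding D_inv[OF that] by (simp add: D_eq N_def ac_simps)
    finally show "N (flip T y) * q y = N y * q y" .
  qed
  have "\<exists>b. D b \<noteq> 0"
    unfolding D_def
  proof (rule poly_fun_prod_nonzero)
    show "\<exists>b. q (flip T b) \<noteq> 0" for T
      using \<open>q a \<noteq> 0\<close> by (intro exI[of _ "flip T a"]) (simp add: flip_flip)
  qed (auto intro: poly_fun_flip q)
  moreover have "p x * D x = N x * q x" for x
    by (simp add: D_eq N_def)
  ultimately show ?thesis
    using that N D N_inv D_inv by blast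
qed

lemma sign_invariant_ratfun_gen_field:
  assumes d: "0 < d" and r: "(p, q) \<in> rat_funs d"
    and inv: "\<And>T x. T \<subseteq> {..<d} \<Longrightarrow> p (flip T x) * q x = p x * q (flip T x)"
  shows "\<exists>s\<in>gen_field d. same_ratfun (p, q) s"
proof -
  from r obtain a where p: "p \<in> poly_fun d" and q: "q \<in> poly_fun d" and "q a \<noteq> 0"
    by (auto simp: rat_funs_def)
  obtain N D where N: "N \<in> poly_fun d" and D: "D \<in> poly_fun d" and "\<exists>b. D b \<noteq> 0"
    and N_inv: "\<And>T x. T \<subseteq> {..<d} \<Longrightarrow> N (flip T x) = N x"
    and D_inv: "\<And>T x. T \<subseteq> {..<d} \<Longrightarrow> D (flip T x) = D x"
    and frac: "\<And>x. p x * D x = N x * q x"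
    using sign_invariant_fraction[OF p q \<open>q a \<noteq> 0\<close> inv] by blast
  then obtain b where "D b \<noteq> 0" by blast
  then obtain x0 where "x0 \<in> torus d" "D x0 \<noteq> 0"
    by (rule poly_fun_nonzero_on_torus[OF D])
  obtain P Q where P: "P \<in> poly_fun d" and Q: "Q \<in> poly_fun d" and "Q (gens d x0) \<noteq> 0"
    and PQ: "\<And>x. x \<in> torus d \<Longrightarrow> N x * Q (gens d x) = D x * P (gens d x)"
    using gen_quot_fraction[OF sign_invariant_gen_quot[OF d N N_inv]
        sign_invariant_gen_quot[OF d D D_inv] \<open>x0 \<in> torus d\<close> \<open>D x0 \<noteq> 0\<close>] by blast
  have "p x * Q (gens d x) = P (gens d x) * q x" for x
  proof (rule poly_fun_mult_cancel[where f = "\<lambda>x. p x * Q (gens d x)"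
        and g = "\<lambda>x. P (gens d x) * q x", OF _ _ D \<open>D b \<noteq> 0\<close>])
    show lhs: "(\<lambda>x. p x * Q (gens d x)) \<in> poly_fun d"
      using p Q d by (intro pf_mult poly_fun_gens_compose)
    show rhs: "(\<lambda>x. P (gens d x) * q x) \<in> poly_fun d"
      using P q d by (intro pf_mult poly_fun_gens_compose)
    show "p y * Q (gens d y) * D y = P (gens d y) * q y * D y" for y
    proof (rule poly_fun_eq_on_torus[where f = "\<lambda>x. p x * Q (gens d x) * D x"
          and g = "\<lambda>x. P (gens d x) * q x * D x"])
      show "(\<lambda>x. p x * Q (gens d x) * D x) \<in> poly_fun d" using lhs D by (rule pf_mult)
      show "(\<lambda>x. P (gens d x) * q x * D x) \<in> poly_fun d" using rhs D by (rule pf_mult)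
      fix x assume "x \<in> torus d"
      have "p x * Q (gens d x) * D x = q x * (N x * Q (gens d x))"
        using frac[of x] by (simp add: ac_simps)
      also have "\<dots> = P (gens d x) * q x * D x"
        unfolding PQ[OF \<open>x \<in> torus d\<close>] by (simp add: ac_simps)
      finally show "p x * Q (gens d x) * D x = P (gens d x) * q x * D x" .
    qed
  qed
  moreover have "(P \<circ> gens d, Q \<circ> gens d) \<in> gen_field d"
    unfolding gen_field_def using P Q \<open>Q (gens d x0) \<noteq> 0\<close> by blast
  ultimately show ?thesis
    by (intro bexI[of _ "(P \<circ> gens d, Q \<circ> gens d)"]) (simp_all add: same_ratfun_def)
qed

lemma gen_field_rat_funs:
  assumes "0 < d" "r \<in> gen_field d"
  shows "r \<in> rat_funs d"
proof -
  obtain P Q where "r = (P \<circ> gens d, Q \<circ> gens d)" "P \<in> poly_fun d" "Q \<in> poly_fun d"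
    "\<exists>x. Q (gens d x) \<noteq> 0"
    using assms(2) by (auto simp: gen_field_def)
  then show ?thesis
    using poly_fun_gens_compose[OF assms(1)] by (auto simp: rat_funs_def comp_def)
qed

lemma gen_field_W_invariant:
  assumes "0 < d" "r \<in> gen_field d"
  shows "W_invariant d r"
proof -
  obtain P Q where "r = (P \<circ> gens d, Q \<circ> gens d)"
    using assms(2) by (auto simp: gen_field_def)
  then show ?thesis
    using gens_W_act[OF _ assms(1)] by (simp add: W_invariant_def same_ratfun_def mult.commute)
qed

theorem lemma3p16:
  fixes d :: nat
  assumes "d \<ge> 2"
  shows "(\<forall>r\<in>gen_field d. r \<in> rat_funs d \<and> W_invariant d r)
       \<and> (\<forall>r\<in>rat_funs d. W_invariant d r \<longrightarrow> (\<exists>s\<in>gen_field d. same_ratfun r s))"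
proof -
  have d: "0 < d" using assms by simp
  have "\<exists>s\<in>gen_field d. same_ratfun (p, q) s"
    if r: "(p, q) \<in> rat_funs d" and inv: "W_invariant d (p, q)" for p q
  proof (rule sign_invariant_ratfun_gen_field[OF d r])
    have "p \<in> poly_fun d" "q \<in> poly_fun d" using r by (auto simp: rat_funs_def)
    then show "p (flip T x) * q x = p x * q (flip T x)" for T x
      using W_invariant_flip[OF d _ _ inv] by blast
  qed
  then show ?thesis
    using gen_field_rat_funs[OF d] gen_field_W_invariant[OF d] by auto
qed

end
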